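(* Let $C>0$ be a constant such that for every sufficiently large positive integer $q$ there exists a subset $S\subseteq\mathbb{Z}/q\mathbb{Z}$ with $|S|>q/\exp(C\sqrt{\log q})$ containing no three-term arithmetic progression modulo $q$ (no $a,b,c\in S$ with $a\not\equiv b$ and $a+b\equiv 2c\pmod q$). Then for every sequence $x_1,x_2,x_3,\dots$ of numbers in $(0,1]$ converging to $0$, there are infinitely many positive integers $n$ such that $$\frac{r(x_{n+1})}{r(x_n)}\ <\ \exp\left(-\frac{1}{2C^2}\left(\log^2 x_{n+1}-\log^2 x_n\right)\right).$$
   Context: For a positive integer $n$ and $T\subseteq \mathbb{Z}/n\mathbb{Z}$, $\mu_n(T)=\#\{(a,b,c)\in T^3 : a+b\equiv 2c \pmod n\}/n^2$ (ordered triples, trivial ones included). For $0<\rho\le1$, $r_q(\rho)=\min\{\mu_q(S): S\subseteq \mathbb{Z}/q\mathbb{Z},\ |S|\ge\rho q\}$, and $r(\rho)=\liminf_{q\to\infty,\ q\text{ prime}} r_q(\rho)$. *)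

theory Defs
  imports "HOL-Analysis.Analysis" "HOL-Computational_Algebra.Primes"
begin

text \<open>Z/nZ is represented by the residues {0..<n}; congruences by mod.\<close>

definition mu :: "nat \<Rightarrow> nat set \<Rightarrow> real" where
  "mu n T = real (card {(a, b, c). a \<in> T \<and> b \<in> T \<and> c \<in> T \<and> (a + b) mod n = (2 * c) mod n})
            / (real n)^2"

definition rq :: "nat \<Rightarrow> real \<Rightarrow> real" where
  "rq q \<rho> = Min {mu q S | S. S \<subseteq> {0..<q} \<and> real (card S) \<ge> \<rho> * real q}"

definition r :: "real \<Rightarrow> real" where
  "r \<rho> = real_of_ereal
     (Liminf (inf sequentially (principal {q. prime q})) (\<lambda>q. ereal (rq q \<rho>)))"

end

theory Submission
  imports Defs "HOL-Real_Asymp.Real_Asymp"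
begin

(* Let S be a set of residues modulo m without nontrivial three-term progressions. Replacing
   every s in S by the block 2Us, ..., 2Us + U - 1 with U = p div 4m gives a subset T of the
   lower half of Z/pZ of density at least |S|/(8m); since no wrap-around occurs, the block
   indices of a progression in T form a progression in S, which is therefore trivial, and so
   T has at most |S| U^2 progressions. Hence r(rho) <= 1/m whenever |S| >= 8 rho m. Choosing
   m about exp(log^2(8 rho)/C^2), the hypothesis provides such an S, whence
   r(rho) <= 2 exp(-log^2(8 rho)/C^2) and r(rho) exp(log^2 rho/(2C^2)) tends to 0 as rho -> 0.
   If the claimed inequality failed for all large n, this weighted quantity would be positive
   and nondecreasing along x_n, contradicting x_n -> 0. *)

definition ap_free_mod :: "nat \<Rightarrow> nat set \<Rightarrow> bool" where
  "ap_free_mod q S \<longleftrightarrow> (\<forall>a\<in>S. \<forall>b\<in>S. \<forall>c\<in>S. a \<noteq> b \<longrightarrow> (a + b) mod q \<noteq> (2 * c) mod q)"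

definition ap_triples :: "nat \<Rightarrow> nat set \<Rightarrow> (nat \<times> nat \<times> nat) set" where
  "ap_triples n T = {(a, b, c). a \<in> T \<and> b \<in> T \<and> c \<in> T \<and> (a + b) mod n = (2 * c) mod n}"

lemma mu_eq_card_ap_triples: "mu n T = real (card (ap_triples n T)) / (real n)^2"
  by (simp add: mu_def ap_triples_def)

lemma finite_mu_image: "finite {mu q S | S. S \<subseteq> {0..<q} \<and> P S}"
  by (rule finite_subset[of _ "mu q ` Pow {0..<q}"]) auto

lemma rq_le_mu:
  assumes "T \<subseteq> {0..<q}" "\<rho> * real q \<le> real (card T)"
  shows "rq q \<rho> \<le> mu q T"
  unfolding rq_def by (rule Min_le[OF finite_mu_image]) (use assms in auto)

lemma rq_nonneg:
  assumes "\<rho> \<le> 1"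
  shows "0 \<le> rq q \<rho>"
proof -
  have "mu q {0..<q} \<in> {mu q S | S. S \<subseteq> {0..<q} \<and> \<rho> * real q \<le> real (card S)}"
    using mult_right_mono[OF assms, of "real q"] by auto
  then have "rq q \<rho> \<in> {mu q S | S. S \<subseteq> {0..<q} \<and> \<rho> * real q \<le> real (card S)}"
    unfolding rq_def by (intro Min_in[OF finite_mu_image]) auto
  then show ?thesis
    by (auto simp: mu_def)
qed

lemma primes_sequentially_ne_bot: "inf sequentially (principal {q::nat. prime q}) \<noteq> bot"
proof
  assume "inf sequentially (principal {q::nat. prime q}) = bot"
  then have "\<forall>\<^sub>F q in inf sequentially (principal {q::nat. prime q}). False"
    by simp
  then have "\<forall>\<^sub>F q in sequentially. \<not> prime (q::nat)"
    unfolding eventually_inf_principal by simp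
  then obtain N where "\<forall>q\<ge>N. \<not> prime (q::nat)"
    unfolding eventually_sequentially by blast
  moreover obtain p where "prime p" "p > N"
    using bigger_prime by blast
  ultimately show False
    by auto
qed

lemma real_of_ereal_Liminf_le:
  fixes f :: "'a \<Rightarrow> real"
  assumes "F \<noteq> bot" "\<forall>\<^sub>F x in F. 0 \<le> f x" "\<forall>\<^sub>F x in F. f x \<le> b"
  shows "real_of_ereal (Liminf F (\<lambda>x. ereal (f x))) \<le> b"
proof -
  have "ereal 0 \<le> Liminf F (\<lambda>x. ereal (f x))"
    by (rule Liminf_bounded) (use assms(2) in auto)
  moreover have "Liminf F (\<lambda>x. ereal (f x)) \<le> ereal b"
    by (rule Liminf_le[OF assms(1)]) (use assms(3) in auto)
  ultimately show ?thesis
    by (cases "Liminf F (\<lambda>x. ereal (f x))") auto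
qed

lemma r_nonneg:
  assumes "\<rho> \<le> 1"
  shows "0 \<le> r \<rho>"
  unfolding r_def
  by (intro real_of_ereal_pos Liminf_bounded always_eventually) (simp add: rq_nonneg[OF assms])

lemma r_le:
  assumes "\<rho> \<le> 1" "\<forall>\<^sub>F q in sequentially. rq q \<rho> \<le> b"
  shows "r \<rho> \<le> b"
  unfolding r_def
proof (rule real_of_ereal_Liminf_le[OF primes_sequentially_ne_bot])
  show "\<forall>\<^sub>F q in inf sequentially (principal {q. prime q}). 0 \<le> rq q \<rho>"
    by (simp add: rq_nonneg[OF assms(1)])
  show "\<forall>\<^sub>F q in inf sequentially (principal {q. prime q}). rq q \<rho> \<le> b"
    using assms(2) by (auto simp: eventually_inf_principal elim: eventually_mono)
qed

lemma digits_eq: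
  fixes B :: nat
  assumes "ua + ub < B" "2 * uc < B"
    and "B * sa + ua + (B * sb + ub) = 2 * (B * sc + uc)"
  shows "sa + sb = 2 * sc" "ua + ub = 2 * uc"
proof -
  have eq: "B * (sa + sb) + (ua + ub) = B * (2 * sc) + 2 * uc"
    using assms(3) by (simp add: algebra_simps)
  have "(B * (sa + sb) + (ua + ub)) div B = (B * (2 * sc) + 2 * uc) div B"
    using eq by simp
  then show "sa + sb = 2 * sc"
    using assms(1,2) by simp
  show "ua + ub = 2 * uc"
    using eq \<open>sa + sb = 2 * sc\<close> by simp
qed

lemma mult_div_bounds:
  fixes k p :: nat
  assumes "0 < k" "2 * k \<le> p"
  shows "k * (p div k) \<le> p" "p \<le> 2 * k * (p div k)"
proof -
  show "k * (p div k) \<le> p"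
    by (metis div_times_less_eq_dividend mult.commute)
  have "2 \<le> p div k"
    using div_le_mono[of "2 * k" p k] assms by simp
  have "p = k * (p div k) + p mod k"
    by simp
  moreover have "p mod k < k"
    using assms(1) by simp
  moreover have "k \<le> k * (p div k)"
    using \<open>2 \<le> p div k\<close> by simp
  ultimately show "p \<le> 2 * k * (p div k)"
    by linarith
qed

(* Spacing the blocks 2U apart keeps the sum of two offsets from carrying into the next block. *)
definition blow_up :: "nat \<Rightarrow> nat set \<Rightarrow> nat set" where
  "blow_up U S = (\<lambda>(s, u). 2 * U * s + u) ` (S \<times> {..<U})"

lemma card_blow_up:
  assumes "finite S"
  shows "card (blow_up U S) = card S * U"
proof -
  have "inj_on (\<lambda>(s, u). 2 * U * s + u) (S \<times> {..<U})"
  proof (rule inj_onI, clarify)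
    fix s u s' u' assume "u < U" "u' < U" "2 * U * s + u = 2 * U * s' + u'"
    then have "(2 * U * s + u) div (2 * U) = (2 * U * s' + u') div (2 * U)"
      and "(2 * U * s + u) mod (2 * U) = (2 * U * s' + u') mod (2 * U)"
      by simp_all
    with \<open>u < U\<close> \<open>u' < U\<close> show "s = s' \<and> u = u'"
      by simp
  qed
  then show ?thesis
    unfolding blow_up_def by (simp add: card_image card_cartesian_product)
qed

lemma blow_up_bound:
  assumes "S \<subseteq> {0..<m}" "t \<in> blow_up U S"
  shows "2 * t < 4 * m * U"
proof -
  obtain s u where "s < m" "u < U" "t = 2 * U * s + u"
    using assms unfolding blow_up_def by auto
  moreover have "2 * U * (s + 1) \<le> 2 * U * m"
    using \<open>s < m\<close> by (intro mult_le_mono2) simp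
  ultimately show ?thesis
    by (simp add: algebra_simps)
qed

lemma card_ap_triples_blow_up:
  assumes free: "ap_free_mod m S" and S: "S \<subseteq> {0..<m}" and p: "4 * m * U \<le> p"
  shows "card (ap_triples p (blow_up U S)) \<le> card S * U^2"
proof -
  define g where "g = (\<lambda>(s, u, v). (2 * U * s + u, 2 * U * s + v, 2 * U * s + (u + v) div 2))"
  have "ap_triples p (blow_up U S) \<subseteq> g ` (S \<times> {..<U} \<times> {..<U})"
  proof (clarsimp simp: ap_triples_def)
    fix a b c
    assume abc: "a \<in> blow_up U S" "b \<in> blow_up U S" "c \<in> blow_up U S"
      and "(a + b) mod p = (2 * c) mod p"
    obtain sa ua sb ub sc uc where
      s: "sa \<in> S" "sb \<in> S" "sc \<in> S" and u: "ua < U" "ub < U" "uc < U" and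
      a: "a = 2 * U * sa + ua" and b: "b = 2 * U * sb + ub" and c: "c = 2 * U * sc + uc"
      using abc unfolding blow_up_def by auto
    have "2 * a < p" "2 * b < p" "2 * c < p"
      using blow_up_bound[OF S abc(1)] blow_up_bound[OF S abc(2)] blow_up_bound[OF S abc(3)] p
      by linarith+
    then have "a + b = 2 * c"
      using \<open>(a + b) mod p = (2 * c) mod p\<close> by simp
    then have "sa + sb = 2 * sc" "ua + ub = 2 * uc"
      using digits_eq[of ua ub "2 * U" uc sa sb sc] u unfolding a b c by simp_all
    moreover have "sa \<noteq> sb \<longrightarrow> (sa + sb) mod m \<noteq> (2 * sc) mod m"
      using free s unfolding ap_free_mod_def by blast
    ultimately have "sa = sb"
      by auto
    with \<open>sa + sb = 2 * sc\<close> \<open>ua + ub = 2 * uc\<close> show "(a, b, c) \<in> g ` (S \<times> {..<U} \<times> {..<U})"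
      unfolding g_def a b c by (intro image_eqI[of _ _ "(sa, ua, ub)"]) (use s u in auto)
  qed
  moreover have "finite S"
    using S finite_subset by blast
  ultimately have "card (ap_triples p (blow_up U S)) \<le> card (g ` (S \<times> {..<U} \<times> {..<U}))"
    by (intro card_mono) simp_all
  also have "\<dots> \<le> card (S \<times> {..<U} \<times> {..<U})"
    by (rule card_image_le) (simp add: \<open>finite S\<close>)
  finally show ?thesis
    by (simp add: card_cartesian_product power2_eq_square)
qed

lemma mu_blow_up_le:
  assumes free: "ap_free_mod m S" and S: "S \<subseteq> {0..<m}" and "m \<ge> 1" and U_le: "4 * m * U \<le> p"
  shows "mu p (blow_up U S) \<le> 1 / real m"
proof (cases "p = 0")
  case True
  then show ?thesis
    by (simp add: mu_def)
next
  case False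
  have "card S \<le> m"
    using card_mono[OF _ S] by simp
  then have "card (ap_triples p (blow_up U S)) \<le> m * U^2"
    using card_ap_triples_blow_up[OF free S U_le] by (meson le_trans mult_le_mono1)
  then have "mu p (blow_up U S) \<le> real (m * U^2) / (real p)^2"
    unfolding mu_eq_card_ap_triples by (intro divide_right_mono of_nat_mono) simp_all
  also have "\<dots> \<le> 1 / real m"
  proof -
    have "real (4 * m * U)^2 \<le> (real p)^2"
      by (intro power_mono of_nat_mono U_le) simp
    then have "16 * (real m * real (m * U^2)) \<le> (real p)^2"
      by (simp add: power2_eq_square ac_simps)
    moreover have "0 \<le> real m * real (m * U^2)"
      by simp
    ultimately have "real m * real (m * U^2) \<le> (real p)^2"
      by linarith
    with \<open>p \<noteq> 0\<close> \<open>m \<ge> 1\<close> show ?thesis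
      by (simp add: divide_simps mult.commute)
  qed
  finally show ?thesis .
qed

lemma rq_le_of_ap_free:
  assumes free: "ap_free_mod m S" and S: "S \<subseteq> {0..<m}" and "m \<ge> 1" "8 * m \<le> p"
    and dense: "8 * \<rho> * real m \<le> real (card S)"
  shows "rq p \<rho> \<le> 1 / real m"
proof -
  define U where "U = p div (4 * m)"
  have U_le: "4 * m * U \<le> p" and p_le: "p \<le> 8 * m * U"
    using mult_div_bounds[of "4 * m" p] assms unfolding U_def by simp_all
  have "\<rho> * real p \<le> real (card (blow_up U S))"
  proof (cases "\<rho> \<le> 0")
    case True
    then have "\<rho> * real p \<le> 0"
      by (simp add: mult_nonpos_nonneg)
    then show ?thesis
      by (meson of_nat_0_le_iff order_trans)
  next
    case False
    have "real p \<le> 8 * real m * real U"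
      using of_nat_mono[OF p_le] by simp
    then have "\<rho> * real p \<le> \<rho> * (8 * m * U)"
      using False by (intro mult_left_mono) simp_all
    also have "\<dots> \<le> real (card S) * U"
      using mult_right_mono[OF dense, of "real U"] by (simp add: algebra_simps)
    finally show ?thesis
      using card_blow_up[OF finite_subset[OF S finite_atLeastLessThan]] by simp
  qed
  moreover have "blow_up U S \<subseteq> {0..<p}"
  proof
    fix t assume "t \<in> blow_up U S"
    then have "t < p"
      using blow_up_bound[OF S \<open>t \<in> blow_up U S\<close>] U_le by linarith
    then show "t \<in> {0..<p}"
      by simp
  qed
  ultimately have "rq p \<rho> \<le> mu p (blow_up U S)"
    by (intro rq_le_mu)
  also have "\<dots> \<le> 1 / real m"
    by (rule mu_blow_up_le[OF free S \<open>m \<ge> 1\<close> U_le])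
  finally show ?thesis .
qed

lemma r_le_of_ap_free:
  assumes "ap_free_mod m S" "S \<subseteq> {0..<m}" "m \<ge> 1" "\<rho> \<le> 1"
    and "8 * \<rho> * real m \<le> real (card S)"
  shows "r \<rho> \<le> 1 / real m"
proof (rule r_le[OF \<open>\<rho> \<le> 1\<close>])
  show "\<forall>\<^sub>F p in sequentially. rq p \<rho> \<le> 1 / real m"
    unfolding eventually_sequentially using rq_le_of_ap_free[OF assms(1-3) _ assms(5)] by blast
qed

lemma r_le_exp_neg_ln_square:
  fixes C \<rho> :: real
  assumes "C > 0"
    and large: "\<forall>q\<ge>M. \<exists>S. S \<subseteq> {0..<q} \<and>
       real (card S) > real q / exp (C * sqrt (ln (real q))) \<and> ap_free_mod q S"
    and "0 < \<rho>" "8 * \<rho> \<le> 1"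
    and M_le: "real M + 2 \<le> exp ((ln (8 * \<rho>))^2 / C^2)"
  shows "r \<rho> \<le> 2 * exp (- ((ln (8 * \<rho>))^2 / C^2))"
proof -
  define z where "z = (ln (8 * \<rho>))^2 / C^2"
  define m where "m = nat \<lfloor>exp z\<rfloor>"
  have m_le: "real m \<le> exp z" and "exp z - 1 < real m"
    unfolding m_def using real_of_int_floor_gt_diff_one[of "exp z"] by (simp_all add: of_nat_nat)
  then have "M \<le> m" "1 \<le> m" "exp z \<le> 2 * real m"
    using M_le unfolding z_def by linarith+
  then obtain S where S: "S \<subseteq> {0..<m}" "ap_free_mod m S"
    and card_S: "real m / exp (C * sqrt (ln (real m))) < real (card S)"
    using large by blast
  have "ln (real m) \<le> z"
    using ln_le_cancel_iff[of "real m" "exp z"] m_le \<open>1 \<le> m\<close> by simp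
  then have "sqrt (ln (real m)) \<le> sqrt z"
    by simp
  also have "sqrt z = - ln (8 * \<rho>) / C"
    using \<open>C > 0\<close> \<open>0 < \<rho>\<close> \<open>8 * \<rho> \<le> 1\<close> by (simp add: z_def real_sqrt_divide)
  finally have "exp (C * sqrt (ln (real m))) \<le> exp (- ln (8 * \<rho>))"
    using \<open>C > 0\<close> by (simp add: field_simps)
  also have "\<dots> = 1 / (8 * \<rho>)"
    using \<open>0 < \<rho>\<close> by (simp add: exp_minus inverse_eq_divide)
  finally have "real m / (1 / (8 * \<rho>)) \<le> real m / exp (C * sqrt (ln (real m)))"
    by (rule divide_left_mono) (use \<open>0 < \<rho>\<close> in simp_all)
  moreover have "real m / (1 / (8 * \<rho>)) = 8 * \<rho> * real m"
    by simp
  ultimately have "8 * \<rho> * real m \<le> real (card S)"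
    using card_S by linarith
  then have "r \<rho> \<le> 1 / real m"
    using r_le_of_ap_free S \<open>1 \<le> m\<close> \<open>8 * \<rho> \<le> 1\<close> by simp
  also have "\<dots> \<le> 2 * exp (- z)"
    using \<open>exp z \<le> 2 * real m\<close> \<open>1 \<le> m\<close> by (simp add: exp_minus field_simps)
  finally show ?thesis
    unfolding z_def .
qed

lemma eventually_r_le_exp_neg_ln_square:
  fixes C :: real
  assumes "C > 0"
    and large: "\<forall>\<^sub>F q in sequentially. \<exists>S. S \<subseteq> {0..<q} \<and>
       real (card S) > real q / exp (C * sqrt (ln (real q))) \<and> ap_free_mod q S"
  shows "\<forall>\<^sub>F \<rho> in at_right 0. r \<rho> \<le> 2 * exp (- ((ln (8 * \<rho>))^2 / C^2))"
proof -
  obtain M where M: "\<forall>q\<ge>M. \<exists>S. S \<subseteq> {0..<q} \<and>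
       real (card S) > real q / exp (C * sqrt (ln (real q))) \<and> ap_free_mod q S"
    using large unfolding eventually_sequentially by blast
  have "filterlim (\<lambda>\<rho>. exp ((ln (8 * \<rho>))^2 / C^2)) at_top (at_right 0)"
    using \<open>C > 0\<close> by real_asymp
  then have "\<forall>\<^sub>F \<rho> in at_right 0. real M + 2 \<le> exp ((ln (8 * \<rho>))^2 / C^2)"
    by (simp add: filterlim_at_top)
  moreover have "\<forall>\<^sub>F \<rho> in at_right 0. 0 < \<rho> \<and> 8 * \<rho> \<le> (1::real)"
    unfolding eventually_at_right_field by (intro exI[of _ "1 / 8"]) auto
  ultimately show ?thesis
    by eventually_elim (use r_le_exp_neg_ln_square[OF \<open>C > 0\<close> M] in auto)
qed

lemma r_weighted_tendsto_zero:
  fixes C :: real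
  assumes "C > 0"
    and large: "\<forall>\<^sub>F q in sequentially. \<exists>S. S \<subseteq> {0..<q} \<and>
       real (card S) > real q / exp (C * sqrt (ln (real q))) \<and> ap_free_mod q S"
  shows "((\<lambda>\<rho>. r \<rho> * exp ((ln \<rho>)^2 / (2 * C^2))) \<longlongrightarrow> 0) (at_right 0)"
proof (rule tendsto_sandwich)
  have "\<forall>\<^sub>F \<rho> in at_right 0. \<rho> \<le> (1::real)"
    unfolding eventually_at_right_field by (intro exI[of _ 1]) auto
  then show "\<forall>\<^sub>F \<rho> in at_right 0. 0 \<le> r \<rho> * exp ((ln \<rho>)^2 / (2 * C^2))"
    by eventually_elim (simp add: r_nonneg)
  show "\<forall>\<^sub>F \<rho> in at_right 0. r \<rho> * exp ((ln \<rho>)^2 / (2 * C^2))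
      \<le> 2 * exp (- ((ln (8 * \<rho>))^2 / C^2)) * exp ((ln \<rho>)^2 / (2 * C^2))"
    using eventually_r_le_exp_neg_ln_square[OF assms] by eventually_elim simp
  show "((\<lambda>\<rho>. 2 * exp (- ((ln (8 * \<rho>))^2 / C^2)) * exp ((ln \<rho>)^2 / (2 * C^2))) \<longlongrightarrow> 0)
      (at_right 0)"
    using \<open>C > 0\<close> by real_asymp
qed simp

lemma frequently_ratio_lt_weight_ratio:
  fixes f w :: "nat \<Rightarrow> real"
  assumes nonneg: "\<forall>\<^sub>F n in sequentially. 0 \<le> f n" and w: "\<And>n. 0 < w n"
    and lim: "(\<lambda>n. f n * w n) \<longlonglongrightarrow> 0"
  shows "\<exists>\<^sub>F n in sequentially. f (Suc n) / f n < w n / w (Suc n)"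
proof (rule ccontr)
  assume "\<not> ?thesis"
  then have "\<forall>\<^sub>F n in sequentially. 0 \<le> f n \<and> w n / w (Suc n) \<le> f (Suc n) / f n"
    using nonneg by (auto simp: not_frequently not_less elim: eventually_elim2)
  then obtain N where N: "\<And>n. n \<ge> N \<Longrightarrow> 0 \<le> f n \<and> w n / w (Suc n) \<le> f (Suc n) / f n"
    unfolding eventually_sequentially by blast
  have step: "0 < f n \<and> f n * w n \<le> f (Suc n) * w (Suc n)" if "n \<ge> N" for n
  proof -
    have "0 < w n / w (Suc n)"
      using w by simp
    then have "0 < f n"
      using N[OF that] by (cases "f n = 0") auto
    moreover from this have "f n * w n \<le> f (Suc n) * w (Suc n)"
      using N[OF that] w[of n] w[of "Suc n"] by (simp add: field_simps)
    ultimately show ?thesis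
      by simp
  qed
  have "f N * w N \<le> f n * w n" if "n \<ge> N" for n
    using that by (induction n rule: dec_induct) (auto dest: step order_trans)
  then have "f N * w N \<le> 0"
    using lim by (intro LIMSEQ_le_const[of "\<lambda>n. f n * w n"]) auto
  moreover have "0 < f N * w N"
    using step[of N] w[of N] by simp
  ultimately show False
    by simp
qed

theorem lemma3:
  fixes C :: real
  assumes Cpos: "C > 0"
    and hyp: "\<forall>\<^sub>F q in sequentially. \<exists>S. S \<subseteq> {0..<q} \<and>
               real (card S) > real q / exp (C * sqrt (ln (real q))) \<and>
               (\<forall>a\<in>S. \<forall>b\<in>S. \<forall>c\<in>S. a \<noteq> b \<longrightarrow> (a + b) mod q \<noteq> (2 * c) mod q)"
  shows "\<forall>x :: nat \<Rightarrow> real.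
           (\<forall>n\<ge>1. 0 < x n \<and> x n \<le> 1) \<and> x \<longlonglongrightarrow> 0 \<longrightarrow>
           infinite {n. n \<ge> 1 \<and>
              r (x (n + 1)) / r (x n)
                < exp (- (1 / (2 * C^2)) * ((ln (x (n + 1)))^2 - (ln (x n))^2))}"
proof (intro allI impI)
  fix x :: "nat \<Rightarrow> real"
  assume x: "(\<forall>n\<ge>1. 0 < x n \<and> x n \<le> 1) \<and> x \<longlonglongrightarrow> 0"
  define w where "w n = exp ((ln (x n))^2 / (2 * C^2))" for n
  have "filterlim x (at_right 0) sequentially"
    using x by (intro tendsto_imp_filterlim_at_right eventually_sequentiallyI[of 1]) auto
  then have "(\<lambda>n. r (x n) * w n) \<longlonglongrightarrow> 0"
    unfolding w_def
    by (rule filterlim_compose[OF r_weighted_tendsto_zero[OF Cpos hyp[folded ap_free_mod_def]]])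
  moreover have "\<forall>\<^sub>F n in sequentially. 0 \<le> r (x n)"
    using x by (intro eventually_sequentiallyI[of 1] r_nonneg) auto
  ultimately have "\<exists>\<^sub>F n in sequentially. r (x (Suc n)) / r (x n) < w n / w (Suc n)"
    by (intro frequently_ratio_lt_weight_ratio) (simp_all add: w_def)
  then have "\<exists>\<^sub>F n in sequentially. n \<ge> 1 \<and> r (x (Suc n)) / r (x n) < w n / w (Suc n)"
    by (rule frequently_eventually_conj[OF _ eventually_ge_at_top])
  moreover have "w n / w (Suc n) = exp (- (1 / (2 * C^2)) * ((ln (x (n + 1)))^2 - (ln (x n))^2))"
    for n
    unfolding w_def exp_diff[symmetric] Suc_eq_plus1
    by (intro arg_cong[where f = exp]) (use Cpos in \<open>simp add: field_simps\<close>)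
  ultimately show "infinite {n. n \<ge> 1 \<and>
      r (x (n + 1)) / r (x n) < exp (- (1 / (2 * C^2)) * ((ln (x (n + 1)))^2 - (ln (x n))^2))}"
    by (simp add: frequently_cofinite flip: cofinite_eq_sequentially)
qed

end
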